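(* Let $\mathcal{A}$ be a deterministic, singly-initiated, event-driven distributed protocol that correctly identifies the bridges of every connected graph. Then for every connected graph $G=(V,E)$, the execution of $\mathcal{A}$ on $G$ sends at least $|E|$ messages and takes at least $\mathrm{Diam}(G)/2$ time.
   Context: Network model: a connected undirected graph $G=(V,E)$ whose nodes are processors and whose edges are two-way communication links; each node initially knows only its own identity and its incident links (not the rest of the graph). Singly-initiated means exactly one node begins computing spontaneously; event-driven means every other node performs no action (in particular sends no message) before it has received a message. An edge is a bridge if its deletion disconnects $G$. "Correctly identifies the bridges" means that at termination every edge has been correctly classified as a bridge or non-bridge. $\mathrm{Diam}(G)$ is the maximum distance between two vertices of $G$; time is measured in synchronous rounds. *)

theory Defs
  imports Complex_Main
begin

text \<open>A graph on vertex set V (vertex names are natural numbers, which also serve as the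
  unique processor identities) with edge set E (each edge a 2-element subset of V).\<close>

definition simple_graph :: "nat set \<Rightarrow> nat set set \<Rightarrow> bool" where
  "simple_graph V E \<longleftrightarrow> finite V \<and> V \<noteq> {} \<and>
     (\<forall>e\<in>E. \<exists>u v. e = {u, v} \<and> u \<noteq> v \<and> u \<in> V \<and> v \<in> V)"

definition adjrel :: "nat set set \<Rightarrow> (nat \<times> nat) set" where
  "adjrel E = {(u, v). {u, v} \<in> E}"

definition connected_graph :: "nat set \<Rightarrow> nat set set \<Rightarrow> bool" where
  "connected_graph V E \<longleftrightarrow> (\<forall>u\<in>V. \<forall>v\<in>V. (u, v) \<in> (adjrel E)\<^sup>*)"

definition is_bridge :: "nat set \<Rightarrow> nat set set \<Rightarrow> nat set \<Rightarrow> bool" where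
  "is_bridge V E e \<longleftrightarrow> e \<in> E \<and> \<not> connected_graph V (E - {e})"

definition gdist :: "nat set set \<Rightarrow> nat \<Rightarrow> nat \<Rightarrow> nat" where
  "gdist E u v = (LEAST n. (u, v) \<in> (adjrel E) ^^ n)"

definition diam :: "nat set \<Rightarrow> nat set set \<Rightarrow> nat" where
  "diam V E = Max {gdist E u v | u v. u \<in> V \<and> v \<in> V}"

definition deg :: "nat set set \<Rightarrow> nat \<Rightarrow> nat" where
  "deg E v = card {w. {v, w} \<in> E}"

text \<open>Port numbering: node v knows its incident links only as local ports 0..deg v - 1
  (it does not know the identities of its neighbours); nbr v p is the neighbour at the
  other end of port p of v.\<close>

definition valid_ports :: "nat set \<Rightarrow> nat set set \<Rightarrow> (nat \<Rightarrow> nat \<Rightarrow> nat) \<Rightarrow> bool" where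
  "valid_ports V E nbr \<longleftrightarrow> (\<forall>v\<in>V. bij_betw (nbr v) {..<deg E v} {w. {v, w} \<in> E})"

definition bport :: "nat set set \<Rightarrow> (nat \<Rightarrow> nat \<Rightarrow> nat) \<Rightarrow> nat \<Rightarrow> nat \<Rightarrow> nat" where
  "bport E nbr w q = (THE p. p < deg E (nbr w q) \<and> nbr (nbr w q) p = w)"

text \<open>A deterministic protocol: initial local state from (own identity, degree);
  a step function mapping current state and the messages received this round (one optional
  message per port) to the new state and the messages to send (one optional message per port);
  the node_output register (classification of each port as bridge / non-bridge, None = not node_output);
  and a halting predicate.\<close>

datatype ('s, 'm) protocol = Protocol
  (p_init: "nat \<Rightarrow> nat \<Rightarrow> 's")
  (p_step: "'s \<Rightarrow> (nat \<Rightarrow> 'm option) \<Rightarrow> 's \<times> (nat \<Rightarrow> 'm option)")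
  (p_out: "'s \<Rightarrow> nat \<Rightarrow> bool option")
  (p_halted: "'s \<Rightarrow> bool")

definition deliver :: "nat set \<Rightarrow> nat set set \<Rightarrow> (nat \<Rightarrow> nat \<Rightarrow> nat)
    \<Rightarrow> (nat \<Rightarrow> nat \<Rightarrow> 'm option) \<Rightarrow> nat \<Rightarrow> nat \<Rightarrow> 'm option" where
  "deliver V E nbr sends = (\<lambda>w q. if w \<in> V \<and> q < deg E w then sends (nbr w q) (bport E nbr w q) else None)"

text \<open>A node acts in a round iff it is awake and not halted, or it is asleep and receives a
  message (event-driven: a non-initiator does nothing before its first message).\<close>
definition acts :: "('s, 'm) protocol \<Rightarrow> nat set set \<Rightarrow> (nat \<Rightarrow> 's option)
    \<Rightarrow> (nat \<Rightarrow> nat \<Rightarrow> 'm option) \<Rightarrow> nat \<Rightarrow> bool" where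
  "acts P E st inb v = (case st v of None \<Rightarrow> (\<exists>q<deg E v. inb v q \<noteq> None)
                                   | Some s \<Rightarrow> \<not> p_halted P s)"

definition cur :: "('s, 'm) protocol \<Rightarrow> nat set set \<Rightarrow> (nat \<Rightarrow> 's option) \<Rightarrow> nat \<Rightarrow> 's" where
  "cur P E st v = (case st v of None \<Rightarrow> p_init P v (deg E v) | Some s \<Rightarrow> s)"

definition inbox :: "nat set set \<Rightarrow> (nat \<Rightarrow> nat \<Rightarrow> 'm option) \<Rightarrow> nat \<Rightarrow> nat \<Rightarrow> 'm option" where
  "inbox E inb v = (\<lambda>q. if q < deg E v then inb v q else None)"

text \<open>Configuration after round t: local states (None = asleep, never acted) and messages in
  transit (to be received at round t+1).  Round 0: the unique initiator r wakes up spontaneously.\<close>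
primrec exec :: "('s, 'm) protocol \<Rightarrow> nat set \<Rightarrow> nat set set \<Rightarrow> (nat \<Rightarrow> nat \<Rightarrow> nat) \<Rightarrow> nat
    \<Rightarrow> nat \<Rightarrow> (nat \<Rightarrow> 's option) \<times> (nat \<Rightarrow> nat \<Rightarrow> 'm option)" where
  "exec P V E nbr r 0 =
     (let res = p_step P (p_init P r (deg E r)) (\<lambda>_. None) in
       ((\<lambda>v. if v = r then Some (fst res) else None),
        deliver V E nbr (\<lambda>v p. if v = r \<and> p < deg E r then snd res p else None)))"
| "exec P V E nbr r (Suc t) =
     (let cfg = exec P V E nbr r t; st = fst cfg; inb = snd cfg;
          res = (\<lambda>v. p_step P (cur P E st v) (inbox E inb v));
          act = (\<lambda>v. v \<in> V \<and> acts P E st inb v) in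
       ((\<lambda>v. if act v then Some (fst (res v)) else st v),
        deliver V E nbr (\<lambda>v p. if act v \<and> p < deg E v then snd (res v) p else None)))"

text \<open>Termination: all awake nodes have halted and no message is in transit
  (afterwards nothing changes any more).\<close>
definition terminated :: "('s, 'm) protocol \<Rightarrow> nat set \<Rightarrow> nat set set \<Rightarrow> (nat \<Rightarrow> nat \<Rightarrow> nat)
    \<Rightarrow> nat \<Rightarrow> nat \<Rightarrow> bool" where
  "terminated P V E nbr r t \<longleftrightarrow>
     (\<forall>v\<in>V. \<forall>s. fst (exec P V E nbr r t) v = Some s \<longrightarrow> p_halted P s) \<and>
     (\<forall>w\<in>V. \<forall>q<deg E w. snd (exec P V E nbr r t) w q = None)"

definition term_time :: "('s, 'm) protocol \<Rightarrow> nat set \<Rightarrow> nat set set \<Rightarrow> (nat \<Rightarrow> nat \<Rightarrow> nat)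
    \<Rightarrow> nat \<Rightarrow> nat" where
  "term_time P V E nbr r = (LEAST t. terminated P V E nbr r t)"

text \<open>Number of messages sent in round t (= in transit after round t).\<close>
definition msgs_at :: "('s, 'm) protocol \<Rightarrow> nat set \<Rightarrow> nat set set \<Rightarrow> (nat \<Rightarrow> nat \<Rightarrow> nat)
    \<Rightarrow> nat \<Rightarrow> nat \<Rightarrow> nat" where
  "msgs_at P V E nbr r t =
     card {(w, q). w \<in> V \<and> q < deg E w \<and> snd (exec P V E nbr r t) w q \<noteq> None}"

definition msg_count :: "('s, 'm) protocol \<Rightarrow> nat set \<Rightarrow> nat set set \<Rightarrow> (nat \<Rightarrow> nat \<Rightarrow> nat)
    \<Rightarrow> nat \<Rightarrow> nat" where
  "msg_count P V E nbr r = (\<Sum>t\<le>term_time P V E nbr r. msgs_at P V E nbr r t)"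

definition node_output :: "('s, 'm) protocol \<Rightarrow> nat set \<Rightarrow> nat set set \<Rightarrow> (nat \<Rightarrow> nat \<Rightarrow> nat)
    \<Rightarrow> nat \<Rightarrow> nat \<Rightarrow> nat \<Rightarrow> nat \<Rightarrow> bool option" where
  "node_output P V E nbr r t v p =
     (case fst (exec P V E nbr r t) v of None \<Rightarrow> None | Some s \<Rightarrow> p_out P s p)"

definition correctly_classified :: "('s, 'm) protocol \<Rightarrow> nat set \<Rightarrow> nat set set
    \<Rightarrow> (nat \<Rightarrow> nat \<Rightarrow> nat) \<Rightarrow> nat \<Rightarrow> nat \<Rightarrow> bool" where
  "correctly_classified P V E nbr r t \<longleftrightarrow>
     (\<forall>v\<in>V. \<forall>p<deg E v. node_output P V E nbr r t v p = Some (is_bridge V E {v, nbr v p}))"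

definition identifies_bridges :: "('s, 'm) protocol \<Rightarrow> bool" where
  "identifies_bridges P \<longleftrightarrow>
     (\<forall>V E nbr r. simple_graph V E \<and> connected_graph V E \<and> valid_ports V E nbr \<and> r \<in> V \<longrightarrow>
        (\<exists>t. terminated P V E nbr r t) \<and>
        correctly_classified P V E nbr r (term_time P V E nbr r))"

end

theory Submission
  imports Defs
begin

(* A node that never receives a message stays asleep and outputs nothing, yet correctness demands
   an output on every port of every node; so at termination time T every node is awake. Messages
   advance one hop per round, hence every node lies within distance T of the initiator and
   Diam(G) <= 2T.
   If neither endpoint of an edge {a, b} sends over it before T, subdivide the edge by a fresh
   node x: a and b keep their degrees and port numbers, so nobody can tell the two graphs apart
   and the executions coincide up to T. The protocol then terminates on the subdivided graph by
   time T with x still asleep, contradicting correctness there. So every edge carries a message,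
   and since a message determines its edge there are at least |E| messages. *)

section \<open>Graphs and port numberings\<close>

lemma simple_graph_edgeD:
  assumes "simple_graph V E" "{u, v} \<in> E"
  shows "u \<in> V" "v \<in> V" "u \<noteq> v"
proof -
  obtain a b where "{u, v} = {a, b}" "a \<noteq> b" "a \<in> V" "b \<in> V"
    using assms unfolding simple_graph_def by blast
  then show "u \<in> V" "v \<in> V" "u \<noteq> v" by (metis doubleton_eq_iff)+
qed

lemma finite_neighbours:
  assumes "simple_graph V E"
  shows "finite {w. {v, w} \<in> E}"
proof (rule finite_subset)
  show "{w. {v, w} \<in> E} \<subseteq> V" using simple_graph_edgeD[OF assms] by blast
  show "finite V" using assms unfolding simple_graph_def by simp
qed

lemma adjrel_sym: "(u, v) \<in> adjrel E \<longleftrightarrow> (v, u) \<in> adjrel E"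
  by (simp add: adjrel_def insert_commute)

lemma relpow_adjrel_sym:
  "(u, v) \<in> adjrel E ^^ n \<Longrightarrow> (v, u) \<in> adjrel E ^^ n"
proof (induction n arbitrary: v)
  case 0
  then show ?case by simp
next
  case (Suc n)
  then obtain w where "(u, w) \<in> adjrel E ^^ n" "(w, v) \<in> adjrel E" by auto
  then show ?case using Suc.IH adjrel_sym by (metis relpow_Suc_I2)
qed

lemma deg_pos_if_connected:
  assumes "simple_graph V E" "connected_graph V E" "u \<in> V" "v \<in> V" "u \<noteq> v"
  shows "0 < deg E v"
proof -
  have "(u, v) \<in> (adjrel E)\<^sup>*" using assms(2-4) unfolding connected_graph_def by blast
  then obtain w where "(w, v) \<in> adjrel E" using assms(5) by (metis rtranclE)
  then have "w \<in> {w. {v, w} \<in> E}" unfolding adjrel_def by (simp add: insert_commute)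
  then show ?thesis
    unfolding deg_def using finite_neighbours[OF assms(1)] card_gt_0_iff by blast
qed

lemma gdist_le: "(u, v) \<in> adjrel E ^^ n \<Longrightarrow> gdist E u v \<le> n"
  unfolding gdist_def by (rule Least_le)

lemma diam_le_twice_radius:
  assumes "finite V" "r \<in> V"
    and radius: "\<And>v. v \<in> V \<Longrightarrow> \<exists>n\<le>k. (r, v) \<in> adjrel E ^^ n"
  shows "diam V E \<le> 2 * k"
proof -
  have "gdist E u v \<le> 2 * k" if "u \<in> V" "v \<in> V" for u v
  proof -
    obtain m n where "m \<le> k" "n \<le> k" "(r, u) \<in> adjrel E ^^ m" "(r, v) \<in> adjrel E ^^ n"
      using radius \<open>u \<in> V\<close> \<open>v \<in> V\<close> by blast
    then have "(u, v) \<in> adjrel E ^^ (m + n)"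
      unfolding relpow_add using relpow_adjrel_sym by blast
    then show ?thesis using \<open>m \<le> k\<close> \<open>n \<le> k\<close> gdist_le by fastforce
  qed
  moreover have "{gdist E u v | u v. u \<in> V \<and> v \<in> V} = (\<lambda>(u, v). gdist E u v) ` (V \<times> V)"
    by auto
  ultimately show ?thesis
    unfolding diam_def using assms(1,2) by (subst Max_le_iff) auto
qed

lemma valid_ports_edge:
  assumes "valid_ports V E nbr" "w \<in> V" "q < deg E w"
  shows "{w, nbr w q} \<in> E"
  using assms unfolding valid_ports_def bij_betw_def by auto

lemma valid_ports_inj:
  assumes "valid_ports V E nbr" "w \<in> V" "q < deg E w" "p < deg E w" "nbr w q = nbr w p"
  shows "q = p"
  using assms unfolding valid_ports_def bij_betw_def inj_on_def by auto

lemma valid_ports_obtain_port: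
  assumes "valid_ports V E nbr" "w \<in> V" "{w, u} \<in> E"
  obtains q where "q < deg E w" "nbr w q = u"
  using assms unfolding valid_ports_def bij_betw_def by (metis imageE lessThan_iff mem_Collect_eq)

lemma bport_unique:
  assumes sg: "simple_graph V E" and vp: "valid_ports V E nbr" and "w \<in> V" "q < deg E w"
  shows "\<exists>!p. p < deg E (nbr w q) \<and> nbr (nbr w q) p = w"
proof -
  have "{nbr w q, w} \<in> E" using valid_ports_edge[OF vp \<open>w \<in> V\<close>] assms(4) by (simp add: insert_commute)
  moreover have "nbr w q \<in> V" using simple_graph_edgeD(1)[OF sg calculation] .
  ultimately show ?thesis
    using valid_ports_obtain_port[OF vp] valid_ports_inj[OF vp] by metis
qed

lemma bport_less_deg:
  assumes "simple_graph V E" "valid_ports V E nbr" "w \<in> V" "q < deg E w"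
  shows "bport E nbr w q < deg E (nbr w q)"
  using theI'[OF bport_unique[OF assms]] unfolding bport_def by blast

lemma nbr_bport:
  assumes "simple_graph V E" "valid_ports V E nbr" "w \<in> V" "q < deg E w"
  shows "nbr (nbr w q) (bport E nbr w q) = w"
  using theI'[OF bport_unique[OF assms]] unfolding bport_def by blast

lemma bport_eqI:
  assumes "simple_graph V E" "valid_ports V E nbr" "w \<in> V" "q < deg E w"
    and "p < deg E (nbr w q)" "nbr (nbr w q) p = w"
  shows "bport E nbr w q = p"
  unfolding bport_def using the1_equality[OF bport_unique[OF assms(1-4)]] assms(5,6) by blast

section \<open>Executions\<close>

definition initial_sends :: "('s, 'm) protocol \<Rightarrow> nat set set \<Rightarrow> nat \<Rightarrow> nat \<Rightarrow> nat \<Rightarrow> 'm option" where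
  "initial_sends P E r = (\<lambda>v p. if v = r \<and> p < deg E r
     then snd (p_step P (p_init P r (deg E r)) (\<lambda>_. None)) p else None)"

definition round_acts :: "('s, 'm) protocol \<Rightarrow> nat set \<Rightarrow> nat set set \<Rightarrow> (nat \<Rightarrow> 's option)
    \<Rightarrow> (nat \<Rightarrow> nat \<Rightarrow> 'm option) \<Rightarrow> nat \<Rightarrow> bool" where
  "round_acts P V E st inb v \<longleftrightarrow> v \<in> V \<and> acts P E st inb v"

definition round_states :: "('s, 'm) protocol \<Rightarrow> nat set \<Rightarrow> nat set set \<Rightarrow> (nat \<Rightarrow> 's option)
    \<Rightarrow> (nat \<Rightarrow> nat \<Rightarrow> 'm option) \<Rightarrow> nat \<Rightarrow> 's option" where
  "round_states P V E st inb = (\<lambda>v. if round_acts P V E st inb v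
     then Some (fst (p_step P (cur P E st v) (inbox E inb v))) else st v)"

definition round_sends :: "('s, 'm) protocol \<Rightarrow> nat set \<Rightarrow> nat set set \<Rightarrow> (nat \<Rightarrow> 's option)
    \<Rightarrow> (nat \<Rightarrow> nat \<Rightarrow> 'm option) \<Rightarrow> nat \<Rightarrow> nat \<Rightarrow> 'm option" where
  "round_sends P V E st inb = (\<lambda>v p. if round_acts P V E st inb v \<and> p < deg E v
     then snd (p_step P (cur P E st v) (inbox E inb v)) p else None)"

lemma exec_0_eq:
  "exec P V E nbr r 0 =
     ((\<lambda>v. if v = r then Some (fst (p_step P (p_init P r (deg E r)) (\<lambda>_. None))) else None),
      deliver V E nbr (initial_sends P E r))"
  unfolding initial_sends_def by (simp add: Let_def)

lemma exec_Suc_eq: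
  "exec P V E nbr r (Suc t) =
     (round_states P V E (fst (exec P V E nbr r t)) (snd (exec P V E nbr r t)),
      deliver V E nbr (round_sends P V E (fst (exec P V E nbr r t)) (snd (exec P V E nbr r t))))"
  unfolding round_states_def round_sends_def round_acts_def by (simp add: Let_def)

declare exec.simps [simp del]

lemma exec_awake_in_V:
  assumes "r \<in> V" "fst (exec P V E nbr r t) v \<noteq> None"
  shows "v \<in> V"
  using assms(2)
proof (induction t)
  case 0
  then show ?case using assms(1) by (simp add: exec_0_eq split: if_splits)
next
  case (Suc t)
  then show ?case by (auto simp: exec_Suc_eq round_states_def round_acts_def split: if_splits)
qed

lemma exec_in_transit_port:
  assumes "snd (exec P V E nbr r t) w q \<noteq> None"
  shows "w \<in> V" "q < deg E w"
  using assms by (cases t; auto simp: exec_0_eq exec_Suc_eq deliver_def split: if_splits)+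

lemma exec_sender_awake:
  assumes "snd (exec P V E nbr r t) w q \<noteq> None"
  shows "fst (exec P V E nbr r t) (nbr w q) \<noteq> None"
proof (cases t)
  case 0
  then have "nbr w q = r"
    using assms by (simp add: exec_0_eq deliver_def initial_sends_def split: if_splits)
  then show ?thesis using 0 by (simp add: exec_0_eq)
next
  case (Suc t')
  then show ?thesis
    using assms by (simp add: exec_Suc_eq deliver_def round_sends_def round_states_def split: if_splits)
qed

lemma exec_awake_reachable:
  assumes vp: "valid_ports V E nbr" and "fst (exec P V E nbr r t) v \<noteq> None"
  shows "\<exists>n\<le>t. (r, v) \<in> adjrel E ^^ n"
  using assms(2)
proof (induction t arbitrary: v)
  case 0
  then show ?case by (simp add: exec_0_eq split: if_splits)
next
  case (Suc t)
  define st where "st = fst (exec P V E nbr r t)"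
  define inb where "inb = snd (exec P V E nbr r t)"
  show ?case
  proof (cases "st v")
    case (Some s)
    then obtain n where "n \<le> t" "(r, v) \<in> adjrel E ^^ n" using Suc.IH unfolding st_def by blast
    then show ?thesis by (intro exI[of _ n]) simp
  next
    case None
    then have "round_acts P V E st inb v"
      using Suc.prems unfolding exec_Suc_eq st_def inb_def round_states_def by (auto split: if_splits)
    with None obtain q where "v \<in> V" "q < deg E v" "inb v q \<noteq> None"
      unfolding round_acts_def acts_def by auto
    then obtain n where "n \<le> t" "(r, nbr v q) \<in> adjrel E ^^ n"
      using Suc.IH[OF exec_sender_awake] unfolding inb_def by blast
    moreover have "(nbr v q, v) \<in> adjrel E"
      using valid_ports_edge[OF vp \<open>v \<in> V\<close> \<open>q < deg E v\<close>] adjrel_sym unfolding adjrel_def by auto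
    ultimately have "(r, v) \<in> adjrel E ^^ Suc n" by auto
    then show ?thesis using \<open>n \<le> t\<close> Suc_le_mono by blast
  qed
qed

lemma identifies_bridgesD:
  assumes "identifies_bridges P"
    and "simple_graph V E" "connected_graph V E" "valid_ports V E nbr" "r \<in> V"
  shows "terminated P V E nbr r (term_time P V E nbr r)"
    and "correctly_classified P V E nbr r (term_time P V E nbr r)"
  using assms unfolding identifies_bridges_def term_time_def by (auto intro: LeastI_ex)

lemma correctly_classified_awake:
  assumes "correctly_classified P V E nbr r t" "v \<in> V" "0 < deg E v"
  shows "fst (exec P V E nbr r t) v \<noteq> None"
  using assms unfolding correctly_classified_def node_output_def by (auto split: option.splits)

lemma diam_le_twice_term_time:
  assumes ib: "identifies_bridges P"
    and sg: "simple_graph V E" and cg: "connected_graph V E" and vp: "valid_ports V E nbr"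
    and "r \<in> V"
  shows "diam V E \<le> 2 * term_time P V E nbr r"
proof (rule diam_le_twice_radius)
  show "finite V" using sg unfolding simple_graph_def by simp
  fix v assume "v \<in> V"
  show "\<exists>n\<le>term_time P V E nbr r. (r, v) \<in> adjrel E ^^ n"
  proof (cases "v = r")
    case False
    then have "0 < deg E v" using deg_pos_if_connected[OF sg cg \<open>r \<in> V\<close> \<open>v \<in> V\<close>] by simp
    with identifies_bridgesD(2)[OF assms] \<open>v \<in> V\<close>
    have "fst (exec P V E nbr r (term_time P V E nbr r)) v \<noteq> None"
      by (rule correctly_classified_awake)
    then show ?thesis by (rule exec_awake_reachable[OF vp])
  qed auto
qed fact

definition in_transit :: "('s, 'm) protocol \<Rightarrow> nat set \<Rightarrow> nat set set \<Rightarrow> (nat \<Rightarrow> nat \<Rightarrow> nat)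
    \<Rightarrow> nat \<Rightarrow> nat \<Rightarrow> (nat \<times> nat) set" where
  "in_transit P V E nbr r t = {(w, q). w \<in> V \<and> q < deg E w \<and> snd (exec P V E nbr r t) w q \<noteq> None}"

lemma finite_in_transit:
  assumes "finite V"
  shows "finite (in_transit P V E nbr r t)"
proof (rule finite_subset)
  show "in_transit P V E nbr r t \<subseteq> Sigma V (\<lambda>w. {..<deg E w})" unfolding in_transit_def by auto
qed (use assms in simp)

lemma msg_count_eq_card:
  assumes "finite V"
  shows "msg_count P V E nbr r
           = card (SIGMA t:{..term_time P V E nbr r}. in_transit P V E nbr r t)"
  unfolding msg_count_def msgs_at_def in_transit_def[symmetric]
  by (rule card_SigmaI[symmetric]) (simp_all add: finite_in_transit[OF assms])

lemma card_le_msg_count: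
  assumes "finite V"
    and carries: "\<And>e. e \<in> E \<Longrightarrow> \<exists>t\<le>term_time P V E nbr r.
                    \<exists>(w, q)\<in>in_transit P V E nbr r t. e = {w, nbr w q}"
  shows "card E \<le> msg_count P V E nbr r"
proof -
  let ?M = "SIGMA t:{..term_time P V E nbr r}. in_transit P V E nbr r t"
  have "E \<subseteq> (\<lambda>(t, w, q). {w, nbr w q}) ` ?M" using carries by fastforce
  then have "card E \<le> card ?M" using finite_in_transit[OF assms(1)] by (intro surj_card_le) blast+
  then show ?thesis unfolding msg_count_eq_card[OF assms(1)] .
qed

section \<open>Subdividing an edge that carries no message\<close>

lemma bij_betw_fun_upd_swap:
  assumes "bij_betw f A B" "p \<in> A" "y \<notin> B"
  shows "bij_betw (f(p := y)) A (insert y (B - {f p}))"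
  using assms unfolding bij_betw_def inj_on_def by (auto simp: image_iff)

lemma card_insert_Diff_singleton:
  assumes "finite S" "b \<in> S" "x \<notin> S"
  shows "card (insert x (S - {b})) = card S"
proof -
  have "card (insert x (S - {b})) = Suc (card (S - {b}))" using assms by simp
  then show ?thesis using card.remove[OF assms(1,2)] by (rule trans[OF _ sym])
qed

locale edge_subdivision =
  fixes V :: "nat set" and E :: "nat set set" and nbr :: "nat \<Rightarrow> nat \<Rightarrow> nat"
    and a b pa pb x :: nat
  assumes sg: "simple_graph V E" and cg: "connected_graph V E" and vp: "valid_ports V E nbr"
    and edge: "{a, b} \<in> E"
    and port_a: "pa < deg E a" "nbr a pa = b"
    and port_b: "pb < deg E b" "nbr b pb = a"
    and fresh: "x \<notin> V"
begin

definition "V' = insert x V"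

definition "E' = (E - {{a, b}}) \<union> {{a, x}, {x, b}}"

definition "nbr' = (\<lambda>w q. if w = x then (if q = 0 then a else b)
   else if w = a \<and> q = pa \<or> w = b \<and> q = pb then x else nbr w q)"

lemma a_in_V: "a \<in> V" and b_in_V: "b \<in> V" and a_neq_b: "a \<noteq> b"
  using simple_graph_edgeD[OF sg edge] by auto

lemma neq_x: "a \<noteq> x" "b \<noteq> x"
  using a_in_V b_in_V fresh by auto

lemma x_notin_neighbours: "x \<notin> {z. {w, z} \<in> E}"
  using fresh simple_graph_edgeD[OF sg] by blast

lemma neighbours_x: "{z. {x, z} \<in> E'} = {a, b}"
  using fresh neq_x a_in_V b_in_V simple_graph_edgeD[OF sg] unfolding E'_def
  by (auto simp: doubleton_eq_iff)

lemma neighbours_a: "{z. {a, z} \<in> E'} = insert x ({z. {a, z} \<in> E} - {b})"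
  using fresh neq_x a_in_V b_in_V simple_graph_edgeD[OF sg] unfolding E'_def
  by (auto simp: doubleton_eq_iff)

lemma neighbours_b: "{z. {b, z} \<in> E'} = insert x ({z. {b, z} \<in> E} - {a})"
  using fresh neq_x a_in_V b_in_V simple_graph_edgeD[OF sg] unfolding E'_def
  by (auto simp: doubleton_eq_iff insert_commute)

lemma neighbours_other: "w \<notin> {a, b, x} \<Longrightarrow> {z. {w, z} \<in> E'} = {z. {w, z} \<in> E}"
  using fresh neq_x a_in_V b_in_V simple_graph_edgeD[OF sg] unfolding E'_def
  by (auto simp: doubleton_eq_iff)

lemma deg_x: "deg E' x = 2"
  unfolding deg_def neighbours_x using a_neq_b by simp

lemma deg_V:
  assumes "w \<in> V"
  shows "deg E' w = deg E w"
proof -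
  consider "w = a" | "w = b" | "w \<notin> {a, b, x}" using assms fresh by auto
  then show ?thesis
  proof cases
    case 1
    show ?thesis unfolding deg_def 1 neighbours_a
      by (rule card_insert_Diff_singleton[OF finite_neighbours[OF sg] _ x_notin_neighbours])
        (use edge in simp)
  next
    case 2
    show ?thesis unfolding deg_def 2 neighbours_b
      by (rule card_insert_Diff_singleton[OF finite_neighbours[OF sg] _ x_notin_neighbours])
        (use edge in \<open>simp add: insert_commute\<close>)
  next
    case 3
    then show ?thesis unfolding deg_def using neighbours_other by simp
  qed
qed

lemma simple_graph_subdivided: "simple_graph V' E'"
  using sg neq_x a_in_V b_in_V unfolding simple_graph_def V'_def E'_def by auto

lemma connected_graph_subdivided: "connected_graph V' E'"
proof -
  let ?R = "adjrel E'"
  have via_x: "(a, x) \<in> ?R" "(x, a) \<in> ?R" "(x, b) \<in> ?R" "(b, x) \<in> ?R"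
    unfolding adjrel_def E'_def by (auto simp: insert_commute)
  have "adjrel E \<subseteq> ?R\<^sup>*"
  proof
    fix e assume "e \<in> adjrel E"
    then obtain u v where e: "e = (u, v)" "{u, v} \<in> E" unfolding adjrel_def by auto
    show "e \<in> ?R\<^sup>*"
    proof (cases "{u, v} = {a, b}")
      case True
      then have "(u, v) = (a, b) \<or> (u, v) = (b, a)" by (auto simp: doubleton_eq_iff)
      then show ?thesis using via_x e by (auto intro: rtrancl_into_rtrancl[OF r_into_rtrancl])
    next
      case False
      then show ?thesis using e unfolding adjrel_def E'_def by auto
    qed
  qed
  then have old: "(u, v) \<in> ?R\<^sup>*" if "u \<in> V" "v \<in> V" for u v
    using cg that rtrancl_subset_rtrancl unfolding connected_graph_def by blast
  have "(x, v) \<in> ?R\<^sup>*" "(v, x) \<in> ?R\<^sup>*" if "v \<in> V" for v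
    using old[OF a_in_V that] old[OF that a_in_V] via_x
    by (meson converse_rtrancl_into_rtrancl rtrancl.rtrancl_into_rtrancl)+
  then show ?thesis unfolding connected_graph_def V'_def using old by auto
qed

lemma valid_ports_subdivided: "valid_ports V' E' nbr'"
  unfolding valid_ports_def
proof
  fix w assume "w \<in> V'"
  show "bij_betw (nbr' w) {..<deg E' w} {z. {w, z} \<in> E'}"
  proof (cases "w = x")
    case True
    have "{..<2::nat} = {0, 1}" by auto
    then show ?thesis
      unfolding True deg_x neighbours_x nbr'_def using a_neq_b
      by (auto simp: bij_betw_def inj_on_def)
  next
    case False
    then have "w \<in> V" using \<open>w \<in> V'\<close> unfolding V'_def by simp
    then have old: "bij_betw (nbr w) {..<deg E w} {z. {w, z} \<in> E}"
      using vp unfolding valid_ports_def by blast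
    consider "w = a" | "w = b" | "w \<notin> {a, b, x}" using False by auto
    then show ?thesis
    proof cases
      case 1
      have "nbr' w = (nbr a)(pa := x)" unfolding 1 nbr'_def using neq_x a_neq_b by auto
      moreover have "bij_betw ((nbr a)(pa := x)) {..<deg E a} (insert x ({z. {a, z} \<in> E} - {b}))"
        using bij_betw_fun_upd_swap[OF old[unfolded 1], of pa x] port_a x_notin_neighbours by simp
      ultimately show ?thesis unfolding 1 deg_V[OF a_in_V] neighbours_a by simp
    next
      case 2
      have "nbr' w = (nbr b)(pb := x)" unfolding 2 nbr'_def using neq_x a_neq_b by auto
      moreover have "bij_betw ((nbr b)(pb := x)) {..<deg E b} (insert x ({z. {b, z} \<in> E} - {a}))"
        using bij_betw_fun_upd_swap[OF old[unfolded 2], of pb x] port_b x_notin_neighbours by simp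
      ultimately show ?thesis unfolding 2 deg_V[OF b_in_V] neighbours_b by simp
    next
      case 3
      then have "nbr' w = nbr w" unfolding nbr'_def by auto
      then show ?thesis using old unfolding deg_V[OF \<open>w \<in> V\<close>] neighbours_other[OF 3] by simp
    qed
  qed
qed

lemma bport_edge: "bport E nbr a pa = pb" "bport E nbr b pb = pa"
  using bport_eqI[OF sg vp a_in_V port_a(1)] bport_eqI[OF sg vp b_in_V port_b(1)]
    port_a port_b by simp_all

lemma bport_x: "bport E' nbr' x 0 = pa" "bport E' nbr' x 1 = pb"
  using bport_eqI[OF simple_graph_subdivided valid_ports_subdivided, of x 0 pa]
    bport_eqI[OF simple_graph_subdivided valid_ports_subdivided, of x 1 pb]
    port_a port_b deg_x deg_V a_in_V b_in_V neq_x a_neq_b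
  unfolding V'_def nbr'_def by simp_all

lemma ports_unchanged:
  assumes "w \<in> V" "q < deg E w" "\<not> (w = a \<and> q = pa)" "\<not> (w = b \<and> q = pb)"
  shows "nbr' w q = nbr w q" "bport E' nbr' w q = bport E nbr w q"
proof -
  show nbr_eq: "nbr' w q = nbr w q" unfolding nbr'_def using assms fresh by auto
  let ?u = "nbr w q" and ?p = "bport E nbr w q"
  have "?u \<in> V" using valid_ports_edge[OF vp assms(1,2)] simple_graph_edgeD[OF sg] by blast
  have reverse_port: "?p < deg E ?u" "nbr ?u ?p = w"
    using bport_less_deg[OF sg vp assms(1,2)] nbr_bport[OF sg vp assms(1,2)] by auto
  have "\<not> (?u = a \<and> ?p = pa)"
  proof
    assume "?u = a \<and> ?p = pa"
    then have "w = b" "nbr w q = nbr b pb" using reverse_port port_a port_b by auto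
    then show False using assms valid_ports_inj[OF vp b_in_V _ port_b(1)] by auto
  qed
  moreover have "\<not> (?u = b \<and> ?p = pb)"
  proof
    assume "?u = b \<and> ?p = pb"
    then have "w = a" "nbr w q = nbr a pa" using reverse_port port_a port_b by auto
    then show False using assms valid_ports_inj[OF vp a_in_V _ port_a(1)] by auto
  qed
  ultimately have "nbr' ?u ?p = w" unfolding nbr'_def using reverse_port fresh \<open>?u \<in> V\<close> by auto
  then show "bport E' nbr' w q = ?p"
    using bport_eqI[OF simple_graph_subdivided valid_ports_subdivided, of w q ?p] assms(1,2) reverse_port
      nbr_eq deg_V \<open>?u \<in> V\<close> unfolding V'_def by simp
qed

lemma deliver_edge: "deliver V E nbr S a pa = S b pb" "deliver V E nbr S b pb = S a pa"
  unfolding deliver_def using a_in_V b_in_V port_a port_b bport_edge by simp_all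

lemma deliver_subdivided:
  assumes "\<And>p. S x p = None" "S a pa = None" "S b pb = None"
  shows "deliver V' E' nbr' S = deliver V E nbr S"
proof (intro ext)
  fix w q
  show "deliver V' E' nbr' S w q = deliver V E nbr S w q"
  proof (cases "w = x")
    case True
    then have "q < 2 \<Longrightarrow> S (nbr' w q) (bport E' nbr' w q) = None"
      using bport_x assms by (auto simp: nbr'_def less_2_cases_iff)
    then show ?thesis using True fresh by (simp add: deliver_def deg_x V'_def)
  next
    case False
    show ?thesis
    proof (cases "w \<in> V \<and> q < deg E w")
      case True
      consider "w = a" "q = pa" | "w = b" "q = pb" | "\<not> (w = a \<and> q = pa)" "\<not> (w = b \<and> q = pb)"
        by blast
      then have "S (nbr' w q) (bport E' nbr' w q) = S (nbr w q) (bport E nbr w q)"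
      proof cases
        case 1
        then show ?thesis using assms neq_x port_a bport_edge by (simp add: nbr'_def)
      next
        case 2
        then show ?thesis using assms neq_x port_b bport_edge by (simp add: nbr'_def)
      next
        case 3
        then show ?thesis using ports_unchanged True by simp
      qed
      then show ?thesis using True deg_V by (simp add: deliver_def V'_def)
    next
      case False
      then show ?thesis using \<open>w \<noteq> x\<close> deg_V by (auto simp: deliver_def V'_def)
    qed
  qed
qed

lemma initial_sends_subdivided:
  assumes "r \<in> V"
  shows "initial_sends P E' r = initial_sends P E r"
  unfolding initial_sends_def deg_V[OF assms] ..

lemma round_subdivided:
  assumes "st x = None" "\<And>q. inb x q = None"
  shows "round_states P V' E' st inb = round_states P V E st inb"
    and "round_sends P V' E' st inb = round_sends P V E st inb"
proof -
  have acts_eq: "round_acts P V' E' st inb v = round_acts P V E st inb v" for v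
    using assms fresh deg_V
    by (cases "v = x") (auto simp: round_acts_def acts_def V'_def split: option.splits)
  have view: "cur P E' st v = cur P E st v" "inbox E' inb v = inbox E inb v" if "v \<in> V" for v
    unfolding cur_def inbox_def deg_V[OF that] by simp_all
  show "round_states P V' E' st inb = round_states P V E st inb"
    unfolding round_states_def acts_eq by (auto simp: round_acts_def view)
  show "round_sends P V' E' st inb = round_sends P V E st inb"
  proof (intro ext)
    fix v p
    show "round_sends P V' E' st inb v p = round_sends P V E st inb v p"
      unfolding round_sends_def acts_eq
      by (cases "v \<in> V") (simp_all add: round_acts_def view deg_V)
  qed
qed

lemma exec_subdivided:
  assumes "r \<in> V"
    and quiet: "\<And>t. t \<le> T \<Longrightarrow>
      snd (exec P V E nbr r t) a pa = None \<and> snd (exec P V E nbr r t) b pb = None"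
  shows "t \<le> T \<Longrightarrow> exec P V' E' nbr' r t = exec P V E nbr r t"
proof (induction t)
  case 0
  let ?S = "initial_sends P E r"
  have "deliver V' E' nbr' ?S = deliver V E nbr ?S"
  proof (rule deliver_subdivided)
    show "?S x p = None" for p using assms(1) fresh by (auto simp: initial_sends_def)
    show "?S a pa = None" "?S b pb = None"
      using quiet[of 0] by (simp_all add: exec_0_eq deliver_edge)
  qed
  then show ?case
    unfolding exec_0_eq deg_V[OF assms(1)] initial_sends_subdivided[OF assms(1)] by simp
next
  case (Suc t)
  define st where "st = fst (exec P V E nbr r t)"
  define inb where "inb = snd (exec P V E nbr r t)"
  have st_x: "st x = None"
    using exec_awake_in_V[OF assms(1), of P E nbr t x] fresh unfolding st_def by blast
  have inb_x: "inb x q = None" for q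
    using exec_in_transit_port(1)[of P V E nbr r t x q] fresh unfolding inb_def by blast
  note round_eq = round_subdivided[of st inb, OF st_x inb_x]
  let ?S = "round_sends P V E st inb"
  have "deliver V' E' nbr' ?S = deliver V E nbr ?S"
  proof (rule deliver_subdivided)
    show "?S x p = None" for p using fresh by (simp add: round_sends_def round_acts_def)
    show "?S a pa = None" "?S b pb = None"
      using quiet[OF Suc.prems] by (simp_all add: exec_Suc_eq deliver_edge flip: st_def inb_def)
  qed
  then show ?case
    using Suc by (simp add: exec_Suc_eq round_eq flip: st_def inb_def)
qed

lemma terminated_subdivided:
  assumes "r \<in> V" and same: "exec P V' E' nbr' r t = exec P V E nbr r t"
    and trm: "terminated P V E nbr r t"
  shows "terminated P V' E' nbr' r t"
  unfolding terminated_def same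
proof (intro conjI ballI allI impI)
  fix v s assume "fst (exec P V E nbr r t) v = Some s"
  moreover from this have "v \<in> V" using exec_awake_in_V[OF \<open>r \<in> V\<close>, of P E nbr t v] by simp
  ultimately show "p_halted P s" using trm unfolding terminated_def by blast
next
  fix w q assume "q < deg E' w"
  then show "snd (exec P V E nbr r t) w q = None"
    using trm deg_V exec_in_transit_port(1) unfolding terminated_def by metis
qed

lemma edge_carries_message:
  assumes ib: "identifies_bridges P" and "r \<in> V"
  shows "\<exists>t\<le>term_time P V E nbr r.
           snd (exec P V E nbr r t) a pa \<noteq> None \<or> snd (exec P V E nbr r t) b pb \<noteq> None"
proof (rule ccontr)
  define T where "T = term_time P V E nbr r"
  define T' where "T' = term_time P V' E' nbr' r"
  assume "\<not> ?thesis"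
  then have same: "exec P V' E' nbr' r t = exec P V E nbr r t" if "t \<le> T" for t
    using exec_subdivided[OF \<open>r \<in> V\<close>, of T] that unfolding T_def by blast
  have r': "r \<in> V'" using \<open>r \<in> V\<close> unfolding V'_def by simp
  note G' = simple_graph_subdivided connected_graph_subdivided valid_ports_subdivided r'
  have "terminated P V' E' nbr' r T"
    using terminated_subdivided[OF \<open>r \<in> V\<close> same] identifies_bridgesD(1)[OF ib sg cg vp \<open>r \<in> V\<close>]
    unfolding T_def by simp
  then have "T' \<le> T" unfolding T'_def term_time_def by (rule Least_le)
  have "fst (exec P V' E' nbr' r T') x \<noteq> None"
    using correctly_classified_awake[OF identifies_bridgesD(2)[OF ib G']] deg_x
    unfolding T'_def V'_def by simp
  moreover have "fst (exec P V E nbr r T') x = None"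
    using exec_awake_in_V[OF \<open>r \<in> V\<close>] fresh by blast
  ultimately show False using same[OF \<open>T' \<le> T\<close>] by simp
qed

end

lemma every_edge_carries_message:
  assumes ib: "identifies_bridges P"
    and sg: "simple_graph V E" and cg: "connected_graph V E" and vp: "valid_ports V E nbr"
    and "r \<in> V" "e \<in> E"
  shows "\<exists>t\<le>term_time P V E nbr r. \<exists>(w, q)\<in>in_transit P V E nbr r t. e = {w, nbr w q}"
proof -
  obtain a b where "e = {a, b}" "a \<in> V" "b \<in> V"
    using sg \<open>e \<in> E\<close> unfolding simple_graph_def by blast
  with \<open>e \<in> E\<close> have "{a, b} \<in> E" "{b, a} \<in> E" by (simp_all add: insert_commute)
  obtain pa pb where "pa < deg E a" "nbr a pa = b" "pb < deg E b" "nbr b pb = a"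
    using valid_ports_obtain_port[OF vp] \<open>a \<in> V\<close> \<open>b \<in> V\<close> \<open>{a, b} \<in> E\<close> \<open>{b, a} \<in> E\<close> by metis
  moreover obtain x where "x \<notin> V"
    using sg ex_new_if_finite[OF infinite_UNIV_nat] unfolding simple_graph_def by blast
  ultimately interpret edge_subdivision V E nbr a b pa pb x
    using sg cg vp \<open>{a, b} \<in> E\<close> by unfold_locales
  obtain t where "t \<le> term_time P V E nbr r"
    "snd (exec P V E nbr r t) a pa \<noteq> None \<or> snd (exec P V E nbr r t) b pb \<noteq> None"
    using edge_carries_message[OF ib \<open>r \<in> V\<close>] by blast
  then have "(a, pa) \<in> in_transit P V E nbr r t \<or> (b, pb) \<in> in_transit P V E nbr r t"
    using port_a port_b a_in_V b_in_V unfolding in_transit_def by auto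
  moreover have "e = {a, nbr a pa}" "e = {b, nbr b pb}"
    using \<open>e = {a, b}\<close> port_a port_b by auto
  ultimately show ?thesis using \<open>t \<le> term_time P V E nbr r\<close> by blast
qed

theorem mainTheorem2:
  fixes P :: "('s, 'm) protocol"
  assumes "identifies_bridges P"
    and "simple_graph V E" and "connected_graph V E" and "valid_ports V E nbr" and "r \<in> V"
  shows "card E \<le> msg_count P V E nbr r \<and>
         real (diam V E) / 2 \<le> real (term_time P V E nbr r)"
proof
  show "card E \<le> msg_count P V E nbr r"
    using card_le_msg_count every_edge_carries_message[OF assms] assms(2)
    unfolding simple_graph_def by blast
  show "real (diam V E) / 2 \<le> real (term_time P V E nbr r)"
    using diam_le_twice_term_time[OF assms] by simp
qed

end
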